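(* Let $r$, $n$, $t$ be positive integers with $2\le t\le r-1$ and $n=3r-t$. Then: (1) if $t\le \frac{r+5}{5}$, then $\rho_2(K(n,r))=3$; (2) if $\frac{r+5}{5}<t\le \frac{2r+9}{9}$, then $\rho_2(K(n,r))=4$.
   Context: For integers $n\ge 2r$, the Kneser graph $K(n,r)$ has as vertices the $r$-element subsets of $[n]=\{1,\dots,n\}$, two vertices being adjacent iff they are disjoint. A $2$-packing of a graph $G$ is a set of vertices pairwise at distance at least $3$ in $G$; $\rho_2(G)$ is the maximum cardinality of a $2$-packing. *)

theory Defs
  imports Complex_Main
begin

definition kneser_vertices :: "nat \<Rightarrow> nat \<Rightarrow> nat set set" where
  "kneser_vertices n r = {A. A \<subseteq> {1..n} \<and> card A = r}"

definition kneser_adj :: "nat \<Rightarrow> nat \<Rightarrow> nat set \<Rightarrow> nat set \<Rightarrow> bool" where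
  "kneser_adj n r A B \<longleftrightarrow> A \<in> kneser_vertices n r \<and> B \<in> kneser_vertices n r \<and> A \<inter> B = {}"

definition dist_at_least :: "('a \<Rightarrow> 'a \<Rightarrow> bool) \<Rightarrow> nat \<Rightarrow> 'a \<Rightarrow> 'a \<Rightarrow> bool" where
  "dist_at_least E d u v \<longleftrightarrow> (\<forall>k<d. \<not> (E ^^ k) u v)"

definition is_2_packing :: "'a set \<Rightarrow> ('a \<Rightarrow> 'a \<Rightarrow> bool) \<Rightarrow> 'a set \<Rightarrow> bool" where
  "is_2_packing V E S \<longleftrightarrow> S \<subseteq> V \<and> (\<forall>u\<in>S. \<forall>v\<in>S. u \<noteq> v \<longrightarrow> dist_at_least E 3 u v)"

definition packing_number_2 :: "'a set \<Rightarrow> ('a \<Rightarrow> 'a \<Rightarrow> bool) \<Rightarrow> nat" where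
  "packing_number_2 V E = Max {card S | S. finite S \<and> is_2_packing V E S}"

definition rho2_kneser :: "nat \<Rightarrow> nat \<Rightarrow> nat" where
  "rho2_kneser n r = packing_number_2 (kneser_vertices n r) (kneser_adj n r)"

end

(* Two distinct r-subsets of [n] are at distance at least 3 in K(n,r) iff they meet and no
   r-set avoids both, i.e. iff 1 <= |A \<inter> B| <= 3r - n - 1 = t - 1. Counting the points of a
   2-packing of size k by a Bonferroni inequality gives 2kr <= 2n + k(k - 1)(t - 1), which fails
   for k = 4 when 5t <= r + 5 and for k = 5 when 9t <= 2r + 9. Conversely, a sunflower of three
   r-sets with kernel of size t - 1 is a 2-packing, and so are four r-sets whose pairwise
   intersections are disjoint blocks of size t - 1 (one for each edge of K_4), which fit into
   [n] once r + 5 < 5t. *)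
theory Submission imports Defs begin

lemma dist_at_least_3_iff:
  "dist_at_least E 3 u v \<longleftrightarrow> u \<noteq> v \<and> \<not> E u v \<and> \<not> (\<exists>w. E u w \<and> E w v)"
proof -
  have "(\<forall>k<3. P k) \<longleftrightarrow> P 0 \<and> P 1 \<and> P 2" for P :: "nat \<Rightarrow> bool"
    by (auto simp: numeral_3_eq_3 numeral_2_eq_2 less_Suc_eq)
  then show ?thesis
    by (simp add: dist_at_least_def numeral_2_eq_2 relcompp_apply)
qed

lemma kneser_vertices_iff: "A \<in> kneser_vertices n r \<longleftrightarrow> A \<subseteq> {1..n} \<and> card A = r"
  by (simp add: kneser_vertices_def)

lemma finite_kneser_vertex: "A \<in> kneser_vertices n r \<Longrightarrow> finite A"
  by (auto simp: kneser_vertices_def intro: finite_subset)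

text \<open>Two vertices have a common neighbour iff the complement of their union still contains
  \<open>r\<close> points.\<close>
lemma kneser_dist_at_least_3_iff:
  assumes u: "u \<in> kneser_vertices n r" and v: "v \<in> kneser_vertices n r" and "u \<noteq> v"
  shows "dist_at_least (kneser_adj n r) 3 u v \<longleftrightarrow> u \<inter> v \<noteq> {} \<and> card (u \<inter> v) + n < 3 * r"
proof -
  have fin: "finite u" "finite v" using u v by (simp_all add: finite_kneser_vertex)
  have "u \<union> v \<subseteq> {1..n}" using u v by (simp add: kneser_vertices_iff)
  then have card_compl: "card ({1..n} - (u \<union> v)) = n - card (u \<union> v)"
    and card_union: "card (u \<union> v) \<le> n"
    using card_mono[of "{1..n}" "u \<union> v"] by (simp_all add: card_Diff_subset fin)
  have card_union_int: "card (u \<union> v) + card (u \<inter> v) = 2 * r"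
    using card_Un_Int[OF fin] u v by (simp add: kneser_vertices_iff)
  have common_nbr: "(\<exists>w. kneser_adj n r u w \<and> kneser_adj n r w v) \<longleftrightarrow> r \<le> card ({1..n} - (u \<union> v))"
  proof
    assume "\<exists>w. kneser_adj n r u w \<and> kneser_adj n r w v"
    then obtain w where "kneser_adj n r u w" "kneser_adj n r w v" by blast
    then have "w \<subseteq> {1..n} - (u \<union> v)" "card w = r"
      by (auto simp: kneser_adj_def kneser_vertices_iff)
    then show "r \<le> card ({1..n} - (u \<union> v))" by (metis card_mono finite_Diff finite_atLeastAtMost)
  next
    assume "r \<le> card ({1..n} - (u \<union> v))"
    then obtain w where "w \<subseteq> {1..n} - (u \<union> v)" "card w = r"
      by (meson obtain_subset_with_card_n)
    then show "\<exists>w. kneser_adj n r u w \<and> kneser_adj n r w v"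
      using u v by (auto simp: kneser_adj_def kneser_vertices_iff)
  qed
  have adj: "kneser_adj n r u v \<longleftrightarrow> u \<inter> v = {}" using u v by (simp add: kneser_adj_def)
  show ?thesis
    using \<open>u \<noteq> v\<close> card_compl card_union card_union_int
    by (auto simp: dist_at_least_3_iff common_nbr adj)
qed

lemma is_2_packing_kneser_iff:
  "is_2_packing (kneser_vertices n r) (kneser_adj n r) S \<longleftrightarrow>
     S \<subseteq> kneser_vertices n r \<and>
     (\<forall>u\<in>S. \<forall>v\<in>S. u \<noteq> v \<longrightarrow> u \<inter> v \<noteq> {} \<and> card (u \<inter> v) + n < 3 * r)"
proof -
  have "dist_at_least (kneser_adj n r) 3 u v \<longleftrightarrow> u \<inter> v \<noteq> {} \<and> card (u \<inter> v) + n < 3 * r"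
    if "S \<subseteq> kneser_vertices n r" "u \<in> S" "v \<in> S" "u \<noteq> v" for u v
    using that by (meson kneser_dist_at_least_3_iff subsetD)
  then show ?thesis unfolding is_2_packing_def by blast
qed

lemma is_2_packing_subset:
  "is_2_packing V E S \<Longrightarrow> T \<subseteq> S \<Longrightarrow> is_2_packing V E T"
  by (auto simp: is_2_packing_def)

lemma packing_number_2_eqI:
  assumes "finite S" "is_2_packing V E S" "card S = k"
    and "\<And>T. finite T \<Longrightarrow> is_2_packing V E T \<Longrightarrow> card T \<le> k"
  shows "packing_number_2 V E = k"
  unfolding packing_number_2_def
proof (rule Max_eqI)
  show "finite {card T |T. finite T \<and> is_2_packing V E T}"
    by (rule finite_subset[of _ "{..k}"]) (use assms(4) in auto)
qed (use assms in auto)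

text \<open>Bonferroni: a point lying in \<open>d \<ge> 1\<close> members satisfies \<open>d \<le> 1 + d (d - 1) / 2\<close>;
  the pairwise intersections are then bounded by \<open>m\<close>.\<close>
lemma sum_card_le_card_Union_add_pairwise_Int:
  assumes "finite F" "\<And>A. A \<in> F \<Longrightarrow> finite A"
    and "\<And>A B. A \<in> F \<Longrightarrow> B \<in> F \<Longrightarrow> A \<noteq> B \<Longrightarrow> card (A \<inter> B) \<le> m"
  shows "2 * (\<Sum>A\<in>F. card A) \<le> 2 * card (\<Union>F) + card F * (card F - 1) * m"
  using assms
proof (induction F rule: finite_induct)
  case empty
  then show ?case by simp
next
  case (insert A F)
  let ?k = "card F"
  have "card (A \<inter> \<Union>F) = card (\<Union>B\<in>F. A \<inter> B)" by (simp only: Int_Union)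
  also have "\<dots> \<le> (\<Sum>B\<in>F. card (A \<inter> B))" using insert.hyps(1) by (rule card_UN_le)
  also have "\<dots> \<le> ?k * m"
  proof -
    have "card (A \<inter> B) \<le> m" if "B \<in> F" for B
      using that insert.hyps(2) insert.prems(2) by blast
    then show ?thesis using sum_bounded_above[of F "\<lambda>B. card (A \<inter> B)" m] by simp
  qed
  finally have overlap: "card (A \<inter> \<Union>F) \<le> ?k * m" .
  have "card A + card (\<Union>F) = card (A \<union> \<Union>F) + card (A \<inter> \<Union>F)"
    using insert.prems(1) insert.hyps(1) by (intro card_Un_Int) auto
  moreover have "2 * (\<Sum>B\<in>F. card B) \<le> 2 * card (\<Union>F) + ?k * (?k - 1) * m"
    using insert.IH insert.prems by blast
  moreover have "Suc ?k * (Suc ?k - 1) * m = ?k * (?k - 1) * m + 2 * (?k * m)"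
    by (cases ?k) (simp_all add: algebra_simps)
  ultimately show ?case using overlap insert.hyps by simp
qed

lemma kneser_2_packing_card_bound:
  assumes packing: "is_2_packing (kneser_vertices n r) (kneser_adj n r) S"
    and "finite S" "k \<le> card S"
  shows "2 * k * r \<le> 2 * n + k * (k - 1) * (3 * r - n - 1)"
proof -
  obtain T where "T \<subseteq> S" "card T = k"
    using \<open>k \<le> card S\<close> obtain_subset_with_card_n by blast
  have "finite T" using \<open>T \<subseteq> S\<close> \<open>finite S\<close> by (rule finite_subset)
  have vertices: "T \<subseteq> kneser_vertices n r"
    and small_Int: "\<And>A B. A \<in> T \<Longrightarrow> B \<in> T \<Longrightarrow> A \<noteq> B \<Longrightarrow> card (A \<inter> B) + n < 3 * r"
    using is_2_packing_subset[OF packing \<open>T \<subseteq> S\<close>] by (auto simp: is_2_packing_kneser_iff)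
  have "2 * (\<Sum>A\<in>T. card A) \<le> 2 * card (\<Union>T) + card T * (card T - 1) * (3 * r - n - 1)"
  proof (rule sum_card_le_card_Union_add_pairwise_Int)
    show "finite A" if "A \<in> T" for A using that vertices finite_kneser_vertex by blast
    show "card (A \<inter> B) \<le> 3 * r - n - 1" if "A \<in> T" "B \<in> T" "A \<noteq> B" for A B
      using small_Int[OF that] by linarith
  qed fact
  moreover have "(\<Sum>A\<in>T. card A) = k * r"
    using vertices \<open>card T = k\<close> by (simp add: kneser_vertices_iff subset_iff)
  moreover have "card (\<Union>T) \<le> n"
  proof -
    have "\<Union>T \<subseteq> {1..n}" using vertices by (force simp: kneser_vertices_iff)
    then show ?thesis using card_mono[of "{1..n}" "\<Union>T"] by simp
  qed
  ultimately show ?thesis using \<open>card T = k\<close> by simp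
qed

definition segment :: "nat \<Rightarrow> nat \<Rightarrow> nat \<Rightarrow> nat set" where
  "segment c a i = {c + i * a..<c + Suc i * a}"

lemma finite_segment [simp]: "finite (segment c a i)"
  by (simp add: segment_def)

lemma card_segment [simp]: "card (segment c a i) = a"
  by (simp add: segment_def)

lemma segment_disjoint: "i \<noteq> j \<Longrightarrow> segment c a i \<inter> segment c a j = {}"
proof (induction i j rule: linorder_wlog)
  case (le i j)
  then have "Suc i * a \<le> j * a" by (intro mult_le_mono1) simp
  then show ?case by (auto simp: segment_def)
qed (simp add: Int_commute)

lemma segment_subset: "i < k \<Longrightarrow> segment c a i \<subseteq> {c..<c + k * a}"
proof -
  assume "i < k"
  then have "Suc i * a \<le> k * a" by (intro mult_le_mono1) simp
  then show ?thesis by (auto simp: segment_def)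
qed

lemma kneser_2_packing_sunflower:
  assumes "0 < c" "c < r" "c + n < 3 * r" "c + k * (r - c) \<le> n"
  shows "\<exists>S. finite S \<and> is_2_packing (kneser_vertices n r) (kneser_adj n r) S \<and> card S = k"
proof -
  define X where "X i = {1..c} \<union> segment (Suc c) (r - c) i" for i
  have core_disjoint: "{1..c} \<inter> segment (Suc c) (r - c) i = {}" for i
    by (auto simp: segment_def)
  have vertex: "X i \<in> kneser_vertices n r" if "i < k" for i
  proof -
    have "card (X i) = c + (r - c)"
      unfolding X_def using core_disjoint by (simp add: card_Un_disjoint)
    moreover have "X i \<subseteq> {1..n}"
      using segment_subset[OF that, of "Suc c" "r - c"] assms(4) by (auto simp: X_def)
    ultimately show ?thesis using assms(2) by (simp add: kneser_vertices_iff)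
  qed
  have Int_X: "X i \<inter> X j = {1..c}" if "i \<noteq> j" for i j
    using segment_disjoint[OF that] unfolding X_def by blast
  have "inj_on X {..<k}"
  proof (rule inj_onI, rule ccontr)
    fix i j assume "i \<in> {..<k}" "X i = X j" "i \<noteq> j"
    then have "card (X i) = c" using Int_X[of i j] by simp
    with vertex \<open>i \<in> {..<k}\<close> assms(2) show False by (simp add: kneser_vertices_iff)
  qed
  then have "card (X ` {..<k}) = k" by (simp add: card_image)
  moreover have "is_2_packing (kneser_vertices n r) (kneser_adj n r) (X ` {..<k})"
    unfolding is_2_packing_kneser_iff
  proof (intro conjI ballI impI)
    show "X ` {..<k} \<subseteq> kneser_vertices n r" using vertex by auto
    fix u v assume "u \<in> X ` {..<k}" "v \<in> X ` {..<k}" "u \<noteq> v"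
    then obtain i j where "u = X i" "v = X j" "i \<noteq> j" by auto
    then have "u \<inter> v = {1..c}" using Int_X by simp
    then show "u \<inter> v \<noteq> {}" "card (u \<inter> v) + n < 3 * r" using assms(1,3) by simp_all
  qed
  ultimately show ?thesis by blast
qed

text \<open>Four \<open>r\<close>-sets indexed by the vertices of \<open>K\<^sub>4\<close>: each edge gets its own block of \<open>a\<close> points,
  shared exactly by its two ends, and each set is completed by a private block.\<close>
lemma kneser_2_packing_four:
  assumes "0 < a" "a + n < 3 * r" "3 * a \<le> r" "6 * a + 4 * (r - 3 * a) \<le> n"
  shows "\<exists>S. finite S \<and> is_2_packing (kneser_vertices n r) (kneser_adj n r) S \<and> card S = 4"
proof -
  define p where "p = r - 3 * a"
  define B where "B = segment 1 a"
  define P where "P = segment (1 + 6 * a) p"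
  have B_disjoint: "i \<noteq> j \<Longrightarrow> B i \<inter> B j = {}" for i j
    unfolding B_def by (rule segment_disjoint)
  have P_disjoint: "i \<noteq> j \<Longrightarrow> P i \<inter> P j = {}" for i j
    unfolding P_def by (rule segment_disjoint)
  have B_subset: "B i \<subseteq> {1..<1 + 6 * a}" if "i < 6" for i
    unfolding B_def using that by (rule segment_subset)
  have P_subset: "P l \<subseteq> {1 + 6 * a..<1 + 6 * a + 4 * p}" if "l < 4" for l
    unfolding P_def using that by (rule segment_subset)
  have B_P_disjoint: "B i \<inter> P j = {}" if "i < 6" for i j
  proof -
    have "P j \<subseteq> {1 + 6 * a..}" by (auto simp: P_def segment_def)
    with B_subset[OF that] show ?thesis by force
  qed
  have vertex: "B i \<union> B j \<union> B k \<union> P l \<in> kneser_vertices n r"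
    if "i < j" "j < k" "k < 6" "l < 4" for i j k l
  proof -
    have "card (B i \<union> B j \<union> B k \<union> P l) = a + a + a + p"
      using that B_disjoint B_P_disjoint
      by (simp add: card_Un_disjoint Int_Un_distrib2 B_def P_def)
    moreover have "B i \<union> B j \<union> B k \<union> P l \<subseteq> {1..<1 + 6 * a + 4 * p}"
      using that B_subset[of i] B_subset[of j] B_subset[of k] P_subset[of l] by auto
    ultimately show ?thesis
      using assms(3,4) by (auto simp: kneser_vertices_iff p_def)
  qed
  define Y0 where "Y0 = B 0 \<union> B 1 \<union> B 2 \<union> P 0"
  define Y1 where "Y1 = B 0 \<union> B 3 \<union> B 4 \<union> P 1"
  define Y2 where "Y2 = B 1 \<union> B 3 \<union> B 5 \<union> P 2"
  define Y3 where "Y3 = B 2 \<union> B 4 \<union> B 5 \<union> P 3"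
  have vertices: "{Y0, Y1, Y2, Y3} \<subseteq> kneser_vertices n r"
    unfolding Y0_def Y1_def Y2_def Y3_def by (simp add: vertex)
  have Int_Y: "Y0 \<inter> Y1 = B 0" "Y0 \<inter> Y2 = B 1" "Y0 \<inter> Y3 = B 2"
    "Y1 \<inter> Y2 = B 3" "Y1 \<inter> Y3 = B 4" "Y2 \<inter> Y3 = B 5"
    unfolding Y0_def Y1_def Y2_def Y3_def
    by (simp_all add: Int_Un_distrib Int_Un_distrib2 B_disjoint P_disjoint B_P_disjoint
        B_P_disjoint[THEN Int_commute[THEN trans]])
  have card_B: "card (B k) = a" for k by (simp add: B_def)
  have distinct: "Y \<noteq> Y'" if "Y \<in> kneser_vertices n r" "Y \<inter> Y' = B k" for Y Y' k
    using that card_B[of k] assms(1,3) by (auto simp: kneser_vertices_iff)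
  have "Y0 \<noteq> Y1" "Y0 \<noteq> Y2" "Y0 \<noteq> Y3" "Y1 \<noteq> Y2" "Y1 \<noteq> Y3" "Y2 \<noteq> Y3"
    using vertices distinct[OF _ Int_Y(1)] distinct[OF _ Int_Y(2)] distinct[OF _ Int_Y(3)]
      distinct[OF _ Int_Y(4)] distinct[OF _ Int_Y(5)] distinct[OF _ Int_Y(6)]
    by simp_all
  then have "card {Y0, Y1, Y2, Y3} = 4" by simp
  moreover have "is_2_packing (kneser_vertices n r) (kneser_adj n r) {Y0, Y1, Y2, Y3}"
    unfolding is_2_packing_kneser_iff
  proof (intro conjI ballI impI vertices)
    fix u v assume "u \<in> {Y0, Y1, Y2, Y3}" "v \<in> {Y0, Y1, Y2, Y3}" "u \<noteq> v"
    then have "u \<inter> v \<in> range B"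
      by (elim insertE emptyE) (simp_all add: Int_Y Int_Y[THEN Int_commute[THEN trans]])
    then obtain k where "u \<inter> v = B k" by blast
    then show "u \<inter> v \<noteq> {}" "card (u \<inter> v) + n < 3 * r"
      using card_B[of k] assms(1,2) by auto
  qed
  ultimately show ?thesis by (intro exI[of _ "{Y0, Y1, Y2, Y3}"]) simp
qed

lemma rho2_kneser_eqI:
  assumes "\<exists>S. finite S \<and> is_2_packing (kneser_vertices n r) (kneser_adj n r) S \<and> card S = k"
    and "2 * n + Suc k * k * (3 * r - n - 1) < 2 * Suc k * r"
  shows "rho2_kneser n r = k"
proof -
  obtain S where "finite S" "is_2_packing (kneser_vertices n r) (kneser_adj n r) S" "card S = k"
    using assms(1) by blast
  then show ?thesis
    unfolding rho2_kneser_def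
  proof (rule packing_number_2_eqI)
    fix T assume "finite T" "is_2_packing (kneser_vertices n r) (kneser_adj n r) T"
    then show "card T \<le> k"
      using kneser_2_packing_card_bound[of n r T "Suc k"] assms(2) by fastforce
  qed
qed

theorem theorem4p8:
  fixes r n t :: nat
  assumes "0 < r" and "2 \<le> t" and "t \<le> r - 1" and "n = 3 * r - t"
  shows "(real t \<le> (real r + 5) / 5 \<longrightarrow> rho2_kneser n r = 3)
       \<and> ((real r + 5) / 5 < real t \<and> real t \<le> (2 * real r + 9) / 9 \<longrightarrow> rho2_kneser n r = 4)"
proof (intro conjI impI)
  assume "real t \<le> (real r + 5) / 5"
  then have "5 * t \<le> r + 5" by (simp add: field_simps flip: of_nat_le_iff)
  show "rho2_kneser n r = 3"
  proof (rule rho2_kneser_eqI)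
    show "\<exists>S. finite S \<and> is_2_packing (kneser_vertices n r) (kneser_adj n r) S \<and> card S = 3"
      using assms by (intro kneser_2_packing_sunflower[where c = "t - 1"]) auto
    show "2 * n + Suc 3 * 3 * (3 * r - n - 1) < 2 * Suc 3 * r"
      using assms \<open>5 * t \<le> r + 5\<close> by simp
  qed
next
  assume "(real r + 5) / 5 < real t \<and> real t \<le> (2 * real r + 9) / 9"
  then have "r + 5 < 5 * t" "9 * t \<le> 2 * r + 9"
    by (simp_all add: field_simps flip: of_nat_le_iff of_nat_less_iff)
  show "rho2_kneser n r = 4"
  proof (rule rho2_kneser_eqI)
    show "\<exists>S. finite S \<and> is_2_packing (kneser_vertices n r) (kneser_adj n r) S \<and> card S = 4"
      using assms \<open>r + 5 < 5 * t\<close> \<open>9 * t \<le> 2 * r + 9\<close>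
      by (intro kneser_2_packing_four[where a = "t - 1"]) auto
    show "2 * n + Suc 4 * 4 * (3 * r - n - 1) < 2 * Suc 4 * r"
      using assms \<open>9 * t \<le> 2 * r + 9\<close> by simp
  qed
qed

end
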